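(* Under Assumption 1, let $(x^k)_{k\in\mathbb{N}}$ be generated by PPGA. If $F$ satisfies the KL property at every point of $\mathrm{dom}(F)$, then $\sum_{k=1}^\infty\|x^k-x^{k-1}\|_2<+\infty$ and $(x^k)$ converges to a stationary point of $F$.
   Context: Let $f:\mathbb{R}^n\to(-\infty,+\infty]$ be proper lsc, $g,h:\mathbb{R}^n\to\mathbb{R}$, $\Omega:=\{x:g(x)\ne0\}$, $F(x):=\frac{f(x)+h(x)}{g(x)}$ on $\Omega\cap\mathrm{dom}(f)$ and $+\infty$ otherwise. Assumption 1: (i) $f$ locally Lipschitz on $\mathrm{dom}(f)\cap\Omega$; (ii) $g$ locally Lipschitz continuously differentiable and positive on $\Omega\cap\mathrm{dom}(f)$; (iii) $\nabla h$ is $L$-Lipschitz, $L>0$; (iv) $f+h\ge0$ on $\mathrm{dom}(f)$, $\Omega\cap\mathrm{dom}(f)\ne\emptyset$; (v) $\mathrm{prox}_{f-\gamma g}(x)\ne\emptyset$ for all $x$, $\gamma\ge0$; (vi) $F$ lsc and level bounded. $\mathrm{prox}_\varphi(x):=\arg\min_u\{\varphi(u)+\frac12\|u-x\|_2^2\}$. Fréchet subdifferential $\hat\partial\varphi(x):=\{v:\liminf_{z\to x,z\ne x}\frac{\varphi(z)-\varphi(x)-\langle v,z-x\rangle}{\|z-x\|_2}\ge0\}$; limiting subdifferential $\partial\varphi(x):=\{v:\exists x^k\to x,\ \varphi(x^k)\to\varphi(x),\ v^k\in\hat\partial\varphi(x^k),\ v^k\to v\}$. A stationary point of $F$ is $x^\star$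 with $0\in\hat\partial F(x^\star)$. KL property: proper lsc $\varphi$ has the KL property at $\hat x\in\mathrm{dom}(\partial\varphi)$ if there exist $\eta\in(0,+\infty]$, a neighborhood $U$ of $\hat x$ and a continuous concave $\psi:[0,\eta)\to[0,+\infty)$ with $\psi(0)=0$, $\psi$ continuously differentiable on $(0,\eta)$ with $\psi'>0$, such that $\psi'(\varphi(x)-\varphi(\hat x))\,\mathrm{dist}(0,\partial\varphi(x))\ge1$ for all $x\in U$ with $\varphi(\hat x)<\varphi(x)<\varphi(\hat x)+\eta$. PPGA: choose $x^0\in\Omega\cap\mathrm{dom}(f)$ and $0<\underline\alpha\le\alpha_k\le\overline\alpha<1/L$; for $k=0,1,\dots$ set $C_k:=F(x^k)$ and pick any $x^{k+1}\in\mathrm{prox}_{\alpha_k(f-C_kg)}(x^k-\alpha_k\nabla h(x^k))$. *)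

theory Defs
  imports "HOL-Analysis.Analysis"
begin

definition effdom :: "('a \<Rightarrow> ereal) \<Rightarrow> 'a set" where
  "effdom \<phi> = {x. \<phi> x \<noteq> \<infinity>}"

definition proper_fun :: "('a \<Rightarrow> ereal) \<Rightarrow> bool" where
  "proper_fun \<phi> \<longleftrightarrow> (\<forall>x. \<phi> x \<noteq> -\<infinity>) \<and> (\<exists>x. \<phi> x \<noteq> \<infinity>)"

definition lsc_fun :: "('a::topological_space \<Rightarrow> ereal) \<Rightarrow> bool" where
  "lsc_fun \<phi> \<longleftrightarrow> (\<forall>x. \<phi> x \<le> Liminf (at x) \<phi>)"

definition level_bounded :: "('a::metric_space \<Rightarrow> ereal) \<Rightarrow> bool" where
  "level_bounded \<phi> \<longleftrightarrow> (\<forall>c::real. bounded {x. \<phi> x \<le> ereal c})"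

definition locally_lipschitz_on :: "'a::metric_space set \<Rightarrow> ('a \<Rightarrow> 'b::real_normed_vector) \<Rightarrow> bool" where
  "locally_lipschitz_on S \<phi> \<longleftrightarrow>
     (\<forall>x\<in>S. \<exists>e>0. \<exists>K. \<forall>y\<in>S \<inter> ball x e. \<forall>z\<in>S \<inter> ball x e.
        dist (\<phi> y) (\<phi> z) \<le> K * dist y z)"

definition prox :: "('a::real_normed_vector \<Rightarrow> ereal) \<Rightarrow> 'a \<Rightarrow> 'a set" where
  "prox \<phi> x = {u. \<forall>v. \<phi> u + ereal ((norm (u - x))\<^sup>2 / 2) \<le> \<phi> v + ereal ((norm (v - x))\<^sup>2 / 2)}"

definition frechet_subdiff :: "('a::real_inner \<Rightarrow> ereal) \<Rightarrow> 'a \<Rightarrow> 'a set" where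
  "frechet_subdiff \<phi> x =
     (if \<phi> x \<in> {\<infinity>, -\<infinity>} then {} else
      {v. Liminf (at x) (\<lambda>z. (\<phi> z - \<phi> x - ereal (inner v (z - x))) / ereal (norm (z - x))) \<ge> 0})"

definition limiting_subdiff :: "('a::real_inner \<Rightarrow> ereal) \<Rightarrow> 'a \<Rightarrow> 'a set" where
  "limiting_subdiff \<phi> x =
     {v. \<exists>X V. X \<longlonglongrightarrow> x \<and> (\<lambda>k. \<phi> (X k)) \<longlonglongrightarrow> \<phi> x \<and>
              (\<forall>k. V k \<in> frechet_subdiff \<phi> (X k)) \<and> V \<longlonglongrightarrow> v}"

definition dist_set :: "'a::metric_space \<Rightarrow> 'a set \<Rightarrow> ereal" where
  "dist_set y A = (if A = {} then \<infinity> else ereal (infdist y A))"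

definition KL_property :: "('a::real_inner \<Rightarrow> ereal) \<Rightarrow> 'a \<Rightarrow> bool" where
  "KL_property \<phi> xh \<longleftrightarrow> \<phi> xh \<noteq> \<infinity> \<and> \<phi> xh \<noteq> -\<infinity> \<and>
     (\<exists>(\<eta>::ereal) U (\<psi>::real \<Rightarrow> real) \<psi>'.
        \<eta> > 0 \<and> open U \<and> xh \<in> U \<and>
        continuous_on {t. 0 \<le> t \<and> ereal t < \<eta>} \<psi> \<and>
        concave_on {t. 0 \<le> t \<and> ereal t < \<eta>} \<psi> \<and>
        (\<forall>t. 0 \<le> t \<and> ereal t < \<eta> \<longrightarrow> \<psi> t \<ge> 0) \<and> \<psi> 0 = 0 \<and>
        (\<forall>t. 0 < t \<and> ereal t < \<eta> \<longrightarrow> (\<psi> has_real_derivative \<psi>' t) (at t) \<and> \<psi>' t > 0) \<and>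
        continuous_on {t. 0 < t \<and> ereal t < \<eta>} \<psi>' \<and>
        (\<forall>x\<in>U. \<phi> xh < \<phi> x \<and> \<phi> x < \<phi> xh + \<eta> \<longrightarrow>
            ereal (\<psi>' (real_of_ereal (\<phi> x - \<phi> xh))) * dist_set 0 (limiting_subdiff \<phi> x) \<ge> 1))"

definition frac_obj :: "('a \<Rightarrow> ereal) \<Rightarrow> ('a \<Rightarrow> real) \<Rightarrow> ('a \<Rightarrow> real) \<Rightarrow> 'a \<Rightarrow> ereal" where
  "frac_obj f g h x =
     (if g x \<noteq> 0 \<and> f x \<noteq> \<infinity> then ereal ((real_of_ereal (f x) + h x) / g x) else \<infinity>)"

definition PPGA_seq :: "('a::euclidean_space \<Rightarrow> ereal) \<Rightarrow> ('a \<Rightarrow> real) \<Rightarrow> ('a \<Rightarrow> real) \<Rightarrow> ('a \<Rightarrow> 'a)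
     \<Rightarrow> real \<Rightarrow> (nat \<Rightarrow> real) \<Rightarrow> (nat \<Rightarrow> 'a) \<Rightarrow> bool" where
  "PPGA_seq f g h gradh L \<alpha> x \<longleftrightarrow>
     x 0 \<in> {y. g y \<noteq> 0} \<inter> effdom f \<and>
     (\<exists>\<alpha>lo \<alpha>hi. 0 < \<alpha>lo \<and> \<alpha>lo \<le> \<alpha>hi \<and> \<alpha>hi < 1 / L \<and> (\<forall>k. \<alpha>lo \<le> \<alpha> k \<and> \<alpha> k \<le> \<alpha>hi)) \<and>
     (\<forall>k. x (Suc k) \<in> prox
        (\<lambda>u. ereal (\<alpha> k) * (f u - ereal (real_of_ereal (frac_obj f g h (x k)) * g u)))
        (x k - \<alpha> k *\<^sub>R gradh (x k)))"

end

theory Submission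
  imports Defs
begin

(* With C k = F (x k), the proximal inequality together with the descent lemma for h gives the
  sufficient decrease C (k+1) <= C k - kappa |x (k+1) - x k|^2 / g (x (k+1)); hence the iterates
  stay in the compact sublevel set {F <= C 0} and the steps tend to 0. Read as a quadratic lower
  model of f + h - C k g around x (k+1), the same inequality yields a Frechet subgradient of F at
  x (k+1) of norm at most b1 |x (k+1) - x k| + b2 (C k - C (k+1)). F equals lim C k at every
  cluster point xb, and the KL inequality at xb together with the concavity of the desingularising
  function psi gives 2 d (k+1) <= P k - P (k+1) + d k / 2 whenever x (k+1) is near xb, where
  P k -> 0. This traps the iterates near xb and makes the sum of the d k finite; the limit is
  stationary by passing to the limit in the lower model. *)

lemma lsc_fun_limit_le:
  fixes \<phi> :: "'a::metric_space \<Rightarrow> ereal"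
  assumes lsc: "lsc_fun \<phi>" and X: "X \<longlonglongrightarrow> l" and le: "\<And>k. \<phi> (X k) \<le> ereal (c k)"
    and c: "c \<longlonglongrightarrow> cl"
  shows "\<phi> l \<le> ereal cl"
proof (rule ccontr)
  assume "\<not> ?thesis"
  hence "ereal cl < \<phi> l" by simp
  then obtain y where y: "ereal cl < y" "y < \<phi> l" using ereal_dense2 by blast
  have "eventually (\<lambda>z. y < \<phi> z) (at l)"
    using lsc y(2) unfolding lsc_fun_def by (simp add: le_Liminf_iff)
  with y(2) have "eventually (\<lambda>z. y < \<phi> z) (nhds l)"
    unfolding eventually_at_filter by (auto elim!: eventually_mono)
  hence "eventually (\<lambda>k. y < \<phi> (X k)) sequentially"
    using X by (rule eventually_compose_filterlim)
  moreover have "eventually (\<lambda>k. ereal (c k) < y) sequentially"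
    using c y(1) by (intro order_tendstoD(2)) auto
  ultimately have "eventually (\<lambda>k. y < \<phi> (X k) \<and> ereal (c k) < y) sequentially"
    by (rule eventually_conj)
  then obtain k where "y < \<phi> (X k)" "ereal (c k) < y"
    unfolding eventually_sequentially by blast
  with le[of k] show False by simp
qed

lemma closed_sublevel_lsc_fun:
  fixes \<phi> :: "'a::metric_space \<Rightarrow> ereal"
  assumes "lsc_fun \<phi>"
  shows "closed {x. \<phi> x \<le> ereal c}"
  unfolding closed_sequential_limits
  using lsc_fun_limit_le[OF assms, of _ _ "\<lambda>_. c" c] by auto

lemma locally_lipschitz_on_imp_continuous_on:
  assumes "locally_lipschitz_on S \<phi>"
  shows "continuous_on S \<phi>"
  unfolding continuous_on_iff
proof (intro ballI allI impI)
  fix y e assume y: "y \<in> S" and e: "(0::real) < e"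
  obtain r K where r: "r > 0"
    and K: "\<forall>a\<in>S \<inter> ball y r. \<forall>b\<in>S \<inter> ball y r. dist (\<phi> a) (\<phi> b) \<le> K * dist a b"
    using assms y unfolding locally_lipschitz_on_def by blast
  define \<delta> where "\<delta> = min r (e / (\<bar>K\<bar> + 1))"
  have \<delta>: "\<delta> > 0" using r e by (simp add: \<delta>_def add_pos_nonneg)
  show "\<exists>\<delta>>0. \<forall>z\<in>S. dist z y < \<delta> \<longrightarrow> dist (\<phi> z) (\<phi> y) < e"
  proof (intro exI[of _ \<delta>] conjI ballI impI)
    fix z assume z: "z \<in> S" "dist z y < \<delta>"
    have "dist (\<phi> z) (\<phi> y) \<le> K * dist z y"
      using K z y r by (simp add: \<delta>_def dist_commute)
    also have "\<dots> \<le> \<bar>K\<bar> * \<delta>"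
      using z by (intro mult_mono) auto
    also have "\<dots> < e"
      using \<delta> by (simp add: \<delta>_def min_def field_simps split: if_splits)
    finally show "dist (\<phi> z) (\<phi> y) < e" .
  qed (fact \<delta>)
qed

lemma frechet_subdiffI:
  fixes \<phi> :: "'a::real_inner \<Rightarrow> ereal"
  assumes px: "\<phi> p = ereal c"
    and ev: "\<And>e. e > 0 \<Longrightarrow>
      eventually (\<lambda>z. ereal (c + inner v (z - p) - e * norm (z - p)) \<le> \<phi> z) (at p)"
  shows "v \<in> frechet_subdiff \<phi> p"
proof -
  have "0 \<le> Liminf (at p) (\<lambda>z. (\<phi> z - \<phi> p - ereal (inner v (z - p))) / ereal (norm (z - p)))"
    unfolding le_Liminf_iff
  proof (intro allI impI)
    fix y :: ereal assume y: "y < 0"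
    obtain e where e: "e > 0" "y < ereal (-e)"
    proof (cases y)
      case (real r) thus ?thesis using y that[of "-r/2"] by auto
    next
      case PInf thus ?thesis using y by auto
    next
      case MInf thus ?thesis using that[of 1] by auto
    qed
    have "eventually (\<lambda>z. z \<noteq> p) (at p)" by (simp add: eventually_at_filter)
    with ev[OF e(1)]
    show "eventually (\<lambda>z. y < (\<phi> z - \<phi> p - ereal (inner v (z - p))) / ereal (norm (z - p))) (at p)"
    proof (eventually_elim)
      case (elim z)
      hence n: "norm (z - p) > 0" by auto
      show ?case
      proof (cases "\<phi> z")
        case (real t)
        with elim have "-e \<le> (t - c - inner v (z - p)) / norm (z - p)"
          using n by (simp add: le_divide_eq)
        hence "y < ereal ((t - c - inner v (z - p)) / norm (z - p))"
          using e(2) by (meson ereal_less_eq(3) order_less_le_trans)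
        thus ?thesis using real px n by simp
      next
        case PInf thus ?thesis using px n y by auto
      next
        case MInf thus ?thesis using elim by simp
      qed
    qed
  qed
  thus ?thesis unfolding frechet_subdiff_def using px by simp
qed

lemma quotient_lower_bound:
  fixes gp gz c e \<epsilon> n N W B M nw :: real
  assumes gp: "gp > 0" and gz: "\<bar>gz - gp\<bar> \<le> gp / 2" and gz_w: "\<bar>gz - gp\<bar> * nw \<le> \<epsilon> * gp"
    and W: "\<bar>W\<bar> \<le> nw * n" and n: "n \<ge> 0" and e: "e > 0" and \<epsilon>: "6 * \<epsilon> = e * gp"
    and M: "M * n < \<epsilon>" and B: "- (\<epsilon> * n) \<le> B" and model: "W + B - M * n\<^sup>2 \<le> N - c * gz"
  shows "c + W / gp - e * n \<le> N / gz"
proof -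
  have gz_pos: "gz \<ge> gp / 2" using gz by linarith
  have "\<bar>W * (gp - gz)\<bar> \<le> (nw * n) * \<bar>gz - gp\<bar>"
    unfolding abs_mult using W by (intro mult_mono) auto
  also have "\<dots> \<le> \<epsilon> * gp * n"
    using mult_right_mono[OF gz_w n] by (simp add: algebra_simps)
  finally have cross: "W * (gp - gz) \<ge> - (\<epsilon> * gp * n)" by linarith
  have "e * n * gz * gp \<ge> e * n * (gp / 2) * gp"
    using gz_pos gp e n by (intro mult_right_mono mult_left_mono) (auto simp: zero_le_mult_iff)
  moreover have "3 * \<epsilon> * n * gp = e * n * (gp / 2) * gp" using \<epsilon> by (simp add: field_simps)
  ultimately have "e * n * gz * gp \<ge> 3 * \<epsilon> * n * gp" by linarith
  with cross have "(W - 2 * \<epsilon> * n) * gp \<ge> (W - e * n * gp) * gz"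
    by (simp add: algebra_simps)
  hence "(W - 2 * \<epsilon> * n) / gz \<ge> W / gp - e * n"
    using gp gz_pos by (simp add: field_simps)
  moreover have "M * n\<^sup>2 \<le> \<epsilon> * n"
    using mult_right_mono[of "M * n" \<epsilon> n] M n by (simp add: power2_eq_square ac_simps)
  with model B have "(N - c * gz) / gz \<ge> (W - 2 * \<epsilon> * n) / gz"
    using gp gz_pos by (intro divide_right_mono) auto
  ultimately show ?thesis using gp gz_pos by (simp add: diff_divide_distrib)
qed

lemma frechet_subdiff_quotient:
  fixes \<phi> :: "'a::real_inner \<Rightarrow> ereal"
  assumes px: "\<phi> p = ereal c" and gp: "g p > 0"
    and gd: "(g has_derivative (\<lambda>v. inner G v)) (at p)"
    and model: "\<And>z. \<phi> z \<noteq> \<infinity> \<Longrightarrow> \<phi> z = ereal (N z / g z) \<and>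
      inner w (z - p) + \<beta> * (g z - g p - inner G (z - p)) - M * (norm (z - p))\<^sup>2 \<le> N z - c * g z"
  shows "(1 / g p) *\<^sub>R w \<in> frechet_subdiff \<phi> p"
proof (rule frechet_subdiffI[where \<phi>=\<phi> and p=p, OF px])
  fix e :: real assume e: "e > 0"
  define \<epsilon> where "\<epsilon> = e * g p / 6"
  have \<epsilon>: "\<epsilon> > 0" using e gp by (simp add: \<epsilon>_def)
  have "\<epsilon> / (\<bar>\<beta>\<bar> + 1) > 0" using \<epsilon> by (simp add: add_pos_nonneg)
  hence "eventually (\<lambda>z. \<bar>g z - g p - inner G (z - p)\<bar> \<le> \<epsilon> / (\<bar>\<beta>\<bar> + 1) * norm (z - p)) (at p)"
    using gd unfolding has_derivative_within_alt2 real_norm_def by blast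
  hence ev_R: "eventually (\<lambda>z. - (\<epsilon> * norm (z - p)) \<le> \<beta> * (g z - g p - inner G (z - p))) (at p)"
  proof eventually_elim
    case (elim z)
    have "\<bar>\<beta> * (g z - g p - inner G (z - p))\<bar> \<le> \<bar>\<beta>\<bar> * (\<epsilon> / (\<bar>\<beta>\<bar> + 1) * norm (z - p))"
      unfolding abs_mult using elim by (rule mult_left_mono) simp
    also have "\<dots> \<le> \<epsilon> * norm (z - p)"
      using \<epsilon> by (simp add: field_simps mult_right_mono)
    finally show ?case by linarith
  qed
  have w1: "norm w + 1 > 0" using norm_ge_zero[of w] by linarith
  have "isCont g p" using has_derivative_continuous[OF gd] .
  moreover have "min (g p / 2) (\<epsilon> * g p / (norm w + 1)) > 0" using \<epsilon> gp w1 by simp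
  ultimately have "eventually (\<lambda>z. dist (g z) (g p) < min (g p / 2) (\<epsilon> * g p / (norm w + 1))) (at p)"
    unfolding isCont_def by (rule tendstoD)
  hence ev_g: "eventually (\<lambda>z. \<bar>g z - g p\<bar> \<le> g p / 2 \<and> \<bar>g z - g p\<bar> * norm w \<le> \<epsilon> * g p) (at p)"
  proof eventually_elim
    case (elim z)
    hence "\<bar>g z - g p\<bar> * (norm w + 1) \<le> \<epsilon> * g p"
      using w1 by (simp add: dist_real_def less_divide_eq less_imp_le)
    moreover have "\<bar>g z - g p\<bar> * norm w \<le> \<bar>g z - g p\<bar> * (norm w + 1)"
      by (simp add: mult_left_mono)
    ultimately show ?case using elim by (simp add: dist_real_def)
  qed
  have "((\<lambda>z. M * norm (z - p)) \<longlongrightarrow> M * norm (p - p)) (at p)"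
    by (intro tendsto_intros)
  hence ev_n: "eventually (\<lambda>z. M * norm (z - p) < \<epsilon>) (at p)"
    using \<epsilon> by (intro order_tendstoD(2)) auto
  show "eventually (\<lambda>z. ereal (c + inner ((1 / g p) *\<^sub>R w) (z - p) - e * norm (z - p)) \<le> \<phi> z) (at p)"
    using ev_R ev_g ev_n
  proof eventually_elim
    case (elim z)
    show ?case
    proof (cases "\<phi> z = \<infinity>")
      case False
      have "c + inner w (z - p) / g p - e * norm (z - p) \<le> N z / g z"
        using elim gp e model[OF False] Cauchy_Schwarz_ineq2[of w "z - p"]
        by (intro quotient_lower_bound[where \<epsilon>=\<epsilon> and M=M]) (auto simp: \<epsilon>_def)
      thus ?thesis using model[OF False] by simp
    qed simp
  qed
qed

lemma lipschitz_gradient_upper_bound: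
  fixes h :: "'a::euclidean_space \<Rightarrow> real"
  assumes hd: "\<And>y. (h has_derivative (\<lambda>v. inner (gh y) v)) (at y)"
    and lip: "\<And>y z. norm (gh y - gh z) \<le> L * norm (y - z)"
  shows "h u \<le> h z + inner (gh z) (u - z) + L / 2 * (norm (u - z))\<^sup>2"
proof -
  define d where "d = u - z"
  define \<phi> where "\<phi> t = h (z + t *\<^sub>R d) - t * inner (gh z) d - L / 2 * t\<^sup>2 * (norm d)\<^sup>2" for t
  have der: "(\<phi> has_real_derivative (inner (gh (z + t *\<^sub>R d)) d - inner (gh z) d - L * t * (norm d)\<^sup>2)) (at t)" for t
  proof -
    have line: "((\<lambda>t. z + t *\<^sub>R d) has_derivative (\<lambda>s. s *\<^sub>R d)) (at t)"
      by (auto intro!: derivative_eq_intros)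
    have "((\<lambda>t. h (z + t *\<^sub>R d)) has_derivative (\<lambda>s. inner (gh (z + t *\<^sub>R d)) (s *\<^sub>R d))) (at t)"
      using has_derivative_compose[OF line hd] .
    hence dh: "((\<lambda>t. h (z + t *\<^sub>R d)) has_real_derivative inner (gh (z + t *\<^sub>R d)) d) (at t)"
      unfolding has_field_derivative_def
      by (rule has_derivative_eq_rhs) (auto simp: fun_eq_iff mult.commute)
    have dlin: "((\<lambda>t. t * inner (gh z) d) has_real_derivative 1 * inner (gh z) d) (at t)"
      by (rule DERIV_cmult_right[OF DERIV_ident])
    have dquad: "((\<lambda>t. L / 2 * t\<^sup>2 * (norm d)\<^sup>2) has_real_derivative L * t * (norm d)\<^sup>2) (at t)"
      by (rule DERIV_cong[OF DERIV_cmult_right[OF DERIV_cmult[OF DERIV_pow]]]) simp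
    have "(\<phi> has_real_derivative (inner (gh (z + t *\<^sub>R d)) d - 1 * inner (gh z) d - L * t * (norm d)\<^sup>2)) (at t)"
      unfolding \<phi>_def by (rule DERIV_diff[OF DERIV_diff[OF dh dlin] dquad])
    thus ?thesis by (rule DERIV_cong) simp
  qed
  have "\<phi> 1 \<le> \<phi> 0"
  proof (rule DERIV_nonpos_imp_nonincreasing[of 0 1 \<phi>])
    fix t :: real assume t: "0 \<le> t" "t \<le> 1"
    have "inner (gh (z + t *\<^sub>R d)) d - inner (gh z) d = inner (gh (z + t *\<^sub>R d) - gh z) d"
      by (simp add: inner_diff_left)
    also have "\<dots> \<le> norm (gh (z + t *\<^sub>R d) - gh z) * norm d" by (rule norm_cauchy_schwarz)
    also have "\<dots> \<le> (L * norm (t *\<^sub>R d)) * norm d"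
      using lip[of "z + t *\<^sub>R d" z] by (simp add: mult_right_mono)
    also have "\<dots> = L * t * (norm d)\<^sup>2" using t by (simp add: power2_eq_square)
    finally show "\<exists>y. DERIV \<phi> t :> y \<and> y \<le> 0" using der by force
  qed simp
  thus ?thesis unfolding \<phi>_def d_def by simp
qed

lemma lipschitz_gradient_lower_bound:
  fixes h :: "'a::euclidean_space \<Rightarrow> real"
  assumes hd: "\<And>y. (h has_derivative (\<lambda>v. inner (gh y) v)) (at y)"
    and lip: "\<And>y z. norm (gh y - gh z) \<le> L * norm (y - z)"
  shows "h z + inner (gh z) (u - z) - L / 2 * (norm (u - z))\<^sup>2 \<le> h u"
proof -
  have "- h u \<le> - h z + inner (- gh z) (u - z) + L / 2 * (norm (u - z))\<^sup>2"
  proof (rule lipschitz_gradient_upper_bound[where h="\<lambda>y. - h y" and gh="\<lambda>y. - gh y"])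
    show "((\<lambda>y. - h y) has_derivative (\<lambda>v. inner (- gh y) v)) (at y)" for y
      using has_derivative_minus[OF hd[of y]] by simp
    show "norm (- gh y - - gh z) \<le> L * norm (y - z)" for y z
      using lip[of y z] by (simp add: norm_minus_commute)
  qed
  thus ?thesis by simp
qed

lemma concave_on_deriv_le_diff:
  fixes \<psi> :: "real \<Rightarrow> real" and \<eta> :: ereal
  assumes cc: "concave_on {t. 0 \<le> t \<and> ereal t < \<eta>} \<psi>"
    and s: "0 < s" "ereal s < \<eta>" and d: "(\<psi> has_real_derivative D) (at s)"
    and t: "0 \<le> t" "t \<le> s"
  shows "\<psi> s - \<psi> t \<ge> D * (s - t)"
proof -
  obtain y where y: "ereal s < y" "y < \<eta>" using s(2) ereal_dense2 by blast
  then obtain s' where s': "y = ereal s'" by (cases y) auto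
  have sub: "{0..s'} \<subseteq> {t. 0 \<le> t \<and> ereal t < \<eta>}"
  proof
    fix x assume "x \<in> {0..s'}"
    hence "0 \<le> x" "ereal x \<le> y" using s' by auto
    thus "x \<in> {t. 0 \<le> t \<and> ereal t < \<eta>}" using y(2) by simp
  qed
  have cv: "convex_on {0..s'} (\<lambda>x. - \<psi> x)"
    using cc sub unfolding concave_on_def by (rule convex_on_subset) simp
  have "(-\<psi> t) - (-\<psi> s) \<ge> (-D) * (t - s)"
  proof (rule convex_on_imp_above_tangent[OF cv])
    show "connected {0..s'}" by simp
    show "s \<in> interior {0..s'}" using s y s' by simp
    show "t \<in> {0..s'}" using t y s' by simp
    show "((\<lambda>x. - \<psi> x) has_real_derivative - D) (at s within {0..s'})"
      by (rule has_field_derivative_at_within[OF DERIV_minus[OF d]])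
  qed
  thus ?thesis by (simp add: algebra_simps)
qed

lemma dist_set_limiting_subdiff_le:
  assumes "v \<in> frechet_subdiff \<phi> p"
  shows "dist_set 0 (limiting_subdiff \<phi> p) \<le> ereal (norm v)"
proof -
  have v: "v \<in> limiting_subdiff \<phi> p" unfolding limiting_subdiff_def
    using assms by (intro CollectI exI[of _ "\<lambda>_. p"] exI[of _ "\<lambda>_. v"]) auto
  hence "infdist 0 (limiting_subdiff \<phi> p) \<le> dist 0 v" by (rule infdist_le)
  thus ?thesis unfolding dist_set_def using v by auto
qed

lemma sum_le_of_descent_inequality:
  fixes d P :: "nat \<Rightarrow> real"
  assumes d: "\<And>k. d k \<ge> 0" and P: "P m \<ge> 0" and Nm: "N \<le> m"
    and step: "\<And>k. N \<le> k \<Longrightarrow> k < m \<Longrightarrow> 2 * d (Suc k) \<le> P k - P (Suc k) + d k / 2"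
  shows "3 * (\<Sum>k=N..m. d k) \<le> 4 * d N + 2 * P N"
proof -
  have "(\<Sum>k=N..<m. 2 * d (Suc k) - d k / 2) \<le> (\<Sum>k=N..<m. P k - P (Suc k))"
  proof (rule sum_mono)
    fix k assume "k \<in> {N..<m}"
    thus "2 * d (Suc k) - d k / 2 \<le> P k - P (Suc k)" using step[of k] by simp
  qed
  also have "\<dots> = P N - P m"
    using sum_Suc_diff'[OF Nm, of "\<lambda>k. - P k"] by simp
  finally have tele: "2 * (\<Sum>k=N..<m. d (Suc k)) - (\<Sum>k=N..<m. d k) / 2 \<le> P N - P m"
    by (simp add: sum_subtractf sum_distrib_left sum_divide_distrib)
  have "(\<Sum>k=N..<m. d (Suc k)) = (\<Sum>k=Suc N..m. d k)"
    by (simp add: sum.shift_bounds_Suc_ivl[symmetric] atLeastLessThanSuc_atLeastAtMost)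
  also have "\<dots> = (\<Sum>k=N..m. d k) - d N"
    using sum.atLeast_Suc_atMost[OF Nm, of d] by simp
  finally have shift: "(\<Sum>k=N..<m. d (Suc k)) = (\<Sum>k=N..m. d k) - d N" .
  have "(\<Sum>k=N..<m. d k) \<le> (\<Sum>k=N..m. d k)"
    using d by (intro sum_mono2) auto
  with tele shift P show ?thesis by linarith
qed

lemma trapped_partial_sums:
  fixes x :: "nat \<Rightarrow> 'a::real_normed_vector" and P :: "nat \<Rightarrow> real"
  assumes start: "norm (x N - xb) < \<rho> / 2" "4 * norm (x (Suc N) - x N) + 2 * P N < 3 * \<rho> / 2"
    and P: "\<And>k. N \<le> k \<Longrightarrow> P k \<ge> 0"
    and step: "\<And>k. N \<le> k \<Longrightarrow> x (Suc k) \<in> ball xb \<rho> \<Longrightarrow>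
      2 * norm (x (Suc (Suc k)) - x (Suc k)) \<le> P k - P (Suc k) + norm (x (Suc k) - x k) / 2"
    and "N \<le> n"
  shows "(\<Sum>k=N..n. norm (x (Suc k) - x k)) < \<rho> / 2"
  using \<open>N \<le> n\<close>
proof (induction n rule: less_induct)
  case (less n)
  have in_ball: "x (Suc k) \<in> ball xb \<rho>" if k: "N \<le> k" "k < n" for k
  proof -
    have "x (Suc k) - x N = (\<Sum>i=N..k. x (Suc i) - x i)"
      using sum_Suc_diff'[of N "Suc k" x] k by (simp add: atLeastLessThanSuc_atLeastAtMost)
    hence "norm (x (Suc k) - x N) < \<rho> / 2"
      using norm_sum[of "\<lambda>i. x (Suc i) - x i" "{N..k}"] less.IH[OF k(2,1)] by simp
    thus ?thesis
      using start(1) norm_triangle_ineq[of "x (Suc k) - x N" "x N - xb"]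
      by (simp add: dist_norm norm_minus_commute)
  qed
  have "3 * (\<Sum>k=N..n. norm (x (Suc k) - x k)) \<le> 4 * norm (x (Suc N) - x N) + 2 * P N"
    using P in_ball less.prems
    by (intro sum_le_of_descent_inequality[where P=P] step) auto
  with start(2) show ?case by linarith
qed

lemma summable_of_eventual_descent:
  fixes x :: "nat \<Rightarrow> 'a::real_normed_vector" and P :: "nat \<Rightarrow> real"
  assumes \<sigma>: "strict_mono \<sigma>" "(x \<circ> \<sigma>) \<longlonglongrightarrow> xb" and \<rho>: "\<rho> > 0"
    and d_lim: "(\<lambda>k. norm (x (Suc k) - x k)) \<longlonglongrightarrow> 0" and P_lim: "P \<longlonglongrightarrow> 0"
    and descent: "\<forall>\<^sub>F k in sequentially. 0 \<le> P k \<and> (x (Suc k) \<in> ball xb \<rho> \<longrightarrow>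
      2 * norm (x (Suc (Suc k)) - x (Suc k)) \<le> P k - P (Suc k) + norm (x (Suc k) - x k) / 2)"
  shows "summable (\<lambda>k. norm (x (Suc k) - x k))"
proof -
  have "\<forall>\<^sub>F k in sequentially. norm (x (Suc k) - x k) < \<rho> / 8 \<and> P k < \<rho> / 4"
    using \<rho> by (intro eventually_conj order_tendstoD(2)[OF d_lim] order_tendstoD(2)[OF P_lim]) auto
  with descent obtain N0 where N0: "\<And>k. k \<ge> N0 \<Longrightarrow> norm (x (Suc k) - x k) < \<rho> / 8 \<and> P k < \<rho> / 4
      \<and> 0 \<le> P k \<and> (x (Suc k) \<in> ball xb \<rho> \<longrightarrow>
        2 * norm (x (Suc (Suc k)) - x (Suc k)) \<le> P k - P (Suc k) + norm (x (Suc k) - x k) / 2)"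
    unfolding eventually_sequentially by (metis (no_types, lifting) eventually_conj eventually_sequentially)
  obtain J where J: "\<And>j. j \<ge> J \<Longrightarrow> dist (x (\<sigma> j)) xb < \<rho> / 2"
    using tendstoD[OF \<sigma>(2), of "\<rho> / 2"] \<rho> unfolding eventually_sequentially by (auto simp: o_def)
  define N where "N = \<sigma> (max J N0)"
  have N0_le: "N0 \<le> N" unfolding N_def using seq_suble[OF \<sigma>(1), of "max J N0"] by simp
  have partial: "(\<Sum>k=N..n. norm (x (Suc k) - x k)) < \<rho> / 2" if "N \<le> n" for n
  proof (rule trapped_partial_sums[where P=P and N=N])
    show "norm (x N - xb) < \<rho> / 2" using J[of "max J N0"] by (simp add: N_def dist_norm)
    show "4 * norm (x (Suc N) - x N) + 2 * P N < 3 * \<rho> / 2" using N0[OF N0_le] \<rho> by (elim conjE) linarith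
  qed (use N0 N0_le that in auto)
  show ?thesis
  proof (rule bounded_imp_summable)
    fix n
    have "(\<Sum>k\<le>n. norm (x (Suc k) - x k)) \<le> (\<Sum>k\<le>n + N. norm (x (Suc k) - x k))"
      by (intro sum_mono2) auto
    also have "\<dots> = (\<Sum>k<N. norm (x (Suc k) - x k)) + (\<Sum>k=N..n + N. norm (x (Suc k) - x k))"
      by (simp add: sum.atLeastLessThan_concat[symmetric] atLeast0LessThan[symmetric]
          atLeastLessThanSuc_atLeastAtMost[symmetric] atMost_atLeast0 lessThan_Suc_atMost[symmetric])
    also have "\<dots> \<le> (\<Sum>k<N. norm (x (Suc k) - x k)) + \<rho> / 2"
      using partial[of "n + N"] by simp
    finally show "(\<Sum>k\<le>n. norm (x (Suc k) - x k)) \<le> (\<Sum>k<N. norm (x (Suc k) - x k)) + \<rho> / 2" .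
  qed simp
qed

lemma LIMSEQ_of_summable_norm_diff:
  fixes x :: "nat \<Rightarrow> 'a::banach"
  assumes "summable (\<lambda>k. norm (x (Suc k) - x k))" "strict_mono \<sigma>" "(x \<circ> \<sigma>) \<longlonglongrightarrow> xb"
  shows "x \<longlonglongrightarrow> xb"
proof -
  have "(\<lambda>n. \<Sum>k<n. x (Suc k) - x k) \<longlonglongrightarrow> (\<Sum>k. x (Suc k) - x k)"
    using summable_norm_cancel[OF assms(1)] by (rule summable_LIMSEQ)
  hence "(\<lambda>n. x 0 + (x n - x 0)) \<longlonglongrightarrow> x 0 + (\<Sum>k. x (Suc k) - x k)"
    by (intro tendsto_intros) (simp add: sum_lessThan_telescope)
  hence lim: "x \<longlonglongrightarrow> x 0 + (\<Sum>k. x (Suc k) - x k)" by simp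
  hence "(x \<circ> \<sigma>) \<longlonglongrightarrow> x 0 + (\<Sum>k. x (Suc k) - x k)" by (rule LIMSEQ_subseq_LIMSEQ[OF _ assms(2)])
  hence "x 0 + (\<Sum>k. x (Suc k) - x k) = xb" using assms(3) LIMSEQ_unique by blast
  with lim show ?thesis by simp
qed

locale ppga =
  fixes f :: "'a::euclidean_space \<Rightarrow> ereal"
    and g h :: "'a \<Rightarrow> real"
    and gradg gradh :: "'a \<Rightarrow> 'a"
    and L :: real
    and \<alpha> :: "nat \<Rightarrow> real"
    and x :: "nat \<Rightarrow> 'a"
    and \<alpha>min \<alpha>max :: real
  assumes f_proper: "proper_fun f"
    and g_deriv: "\<forall>y \<in> {y. g y \<noteq> 0} \<inter> effdom f. (g has_derivative (\<lambda>v. inner (gradg y) v)) (at y)"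
    and gradg_loc_lipschitz: "locally_lipschitz_on ({y. g y \<noteq> 0} \<inter> effdom f) gradg"
    and g_pos: "\<forall>y \<in> {y. g y \<noteq> 0} \<inter> effdom f. g y > 0"
    and h_deriv: "\<forall>y. (h has_derivative (\<lambda>v. inner (gradh y) v)) (at y)"
    and gradh_lipschitz: "\<forall>y z. norm (gradh y - gradh z) \<le> L * norm (y - z)"
    and L_pos: "L > 0"
    and f_h_nonneg: "\<forall>y \<in> effdom f. f y + ereal (h y) \<ge> 0"
    and F_lsc: "lsc_fun (frac_obj f g h)"
    and F_level_bounded: "level_bounded (frac_obj f g h)"
    and x0: "x 0 \<in> {y. g y \<noteq> 0} \<inter> effdom f"
    and \<alpha>_bounds: "0 < \<alpha>min" "\<alpha>min \<le> \<alpha>max" "\<alpha>max < 1 / L" "\<And>k. \<alpha>min \<le> \<alpha> k" "\<And>k. \<alpha> k \<le> \<alpha>max"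
    and x_step: "\<And>k. x (Suc k) \<in> prox
        (\<lambda>u. ereal (\<alpha> k) * (f u - ereal (real_of_ereal (frac_obj f g h (x k)) * g u)))
        (x k - \<alpha> k *\<^sub>R gradh (x k))"
begin

abbreviation "F \<equiv> frac_obj f g h"
abbreviation "\<Omega> \<equiv> {y. g y \<noteq> 0} \<inter> effdom f"

definition "f_real y = real_of_ereal (f y)"
definition "C k = real_of_ereal (F (x k))"
definition "d k = norm (x (Suc k) - x k)"

(* x (Suc k) - (x k - alpha k * gradh (x k)) = alpha k * q k is the residual of the proximal
  step; it produces the subgradient in frechet_subgradient_at_iterate. *)
definition "q k = (1 / \<alpha> k) *\<^sub>R (x (Suc k) - x k) + gradh (x k)"

lemma \<alpha>_pos: "\<alpha> k > 0"
  using \<alpha>_bounds(1) \<alpha>_bounds(4)[of k] by linarith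

lemma f_eq_f_real: "y \<in> effdom f \<Longrightarrow> f y = ereal (f_real y)"
  using f_proper unfolding proper_fun_def effdom_def f_real_def by (cases "f y") auto

lemma F_eq: "y \<in> \<Omega> \<Longrightarrow> F y = ereal ((f_real y + h y) / g y)"
  unfolding frac_obj_def f_real_def effdom_def by auto

lemma mem_\<Omega>_if_F_finite: "F y \<noteq> \<infinity> \<Longrightarrow> y \<in> \<Omega>"
  unfolding frac_obj_def effdom_def by (auto split: if_splits)

lemma g_pos_\<Omega>: "y \<in> \<Omega> \<Longrightarrow> g y > 0"
  using g_pos by blast

lemma f_real_plus_h_nonneg: "y \<in> effdom f \<Longrightarrow> f_real y + h y \<ge> 0"
  using f_h_nonneg f_eq_f_real by force

lemma prox_step_ineq:
  "ereal (\<alpha> k) * (f (x (Suc k)) - ereal (C k * g (x (Suc k))))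
      + ereal ((norm (x (Suc k) - (x k - \<alpha> k *\<^sub>R gradh (x k))))\<^sup>2 / 2)
    \<le> ereal (\<alpha> k) * (f v - ereal (C k * g v)) + ereal ((norm (v - (x k - \<alpha> k *\<^sub>R gradh (x k))))\<^sup>2 / 2)"
  using x_step[of k] unfolding prox_def C_def by blast

lemma x_Suc_in_effdom: "x (Suc k) \<in> effdom f"
proof (rule ccontr)
  assume "x (Suc k) \<notin> effdom f"
  hence "f (x (Suc k)) = \<infinity>" unfolding effdom_def by simp
  moreover obtain v where v: "v \<in> effdom f" using f_proper unfolding proper_fun_def effdom_def by blast
  ultimately show False
    using prox_step_ineq[of k v] \<alpha>_pos[of k] f_eq_f_real[OF v] by simp
qed

lemma prox_inequality:
  assumes "v \<in> effdom f"
  shows "\<alpha> k * (f_real (x (Suc k)) - C k * g (x (Suc k))) + (norm (x (Suc k) - (x k - \<alpha> k *\<^sub>R gradh (x k))))\<^sup>2 / 2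
    \<le> \<alpha> k * (f_real v - C k * g v) + (norm (v - (x k - \<alpha> k *\<^sub>R gradh (x k))))\<^sup>2 / 2"
  using prox_step_ineq[of k v] f_eq_f_real[OF x_Suc_in_effdom] f_eq_f_real[OF assms] by simp

lemma prox_lower_model:
  assumes "u \<in> effdom f"
  shows "f_real (x (Suc k)) + C k * (g u - g (x (Suc k))) - (norm (u - x (Suc k)))\<^sup>2 / (2 * \<alpha> k)
    - inner (u - x (Suc k)) (q k) \<le> f_real u"
proof -
  define p where "p = x (Suc k)"
  define y where "y = x k - \<alpha> k *\<^sub>R gradh (x k)"
  have \<alpha>: "\<alpha> k > 0" by (rule \<alpha>_pos)
  have py: "p - y = \<alpha> k *\<^sub>R q k" using \<alpha> unfolding p_def y_def q_def by (simp add: algebra_simps)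
  have "(norm (u - y))\<^sup>2 = (norm ((u - p) + (p - y)))\<^sup>2" by simp
  also have "\<dots> = (norm (u - p))\<^sup>2 + 2 * inner (u - p) (p - y) + (norm (p - y))\<^sup>2"
    using dot_norm[of "u - p" "p - y"] by simp
  also have "inner (u - p) (p - y) = \<alpha> k * inner (u - p) (q k)" using py by simp
  finally have "(norm (u - y))\<^sup>2 = (norm (u - p))\<^sup>2 + 2 * (\<alpha> k * inner (u - p) (q k)) + (norm (p - y))\<^sup>2" .
  with prox_inequality[OF assms, of k] have
    "\<alpha> k * (f_real p - C k * g p) \<le> \<alpha> k * (f_real u - C k * g u) + (norm (u - p))\<^sup>2 / 2 + \<alpha> k * inner (u - p) (q k)"
    unfolding p_def[symmetric] y_def[symmetric] by linarith
  also have "\<dots> = \<alpha> k * (f_real u - C k * g u + (norm (u - p))\<^sup>2 / (2 * \<alpha> k) + inner (u - p) (q k))"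
    using \<alpha> by (simp add: algebra_simps)
  finally have "f_real p - C k * g p \<le> f_real u - C k * g u + (norm (u - p))\<^sup>2 / (2 * \<alpha> k) + inner (u - p) (q k)"
    using \<alpha> by simp
  thus ?thesis unfolding p_def by (simp add: algebra_simps)
qed

definition "\<kappa> = 1 / (2 * \<alpha>max) - L / 2"

lemma \<kappa>_pos: "\<kappa> > 0"
proof -
  have "\<alpha>max > 0" using \<alpha>_bounds by linarith
  hence "\<alpha>max * L < 1" using \<alpha>_bounds(3) L_pos by (simp add: less_divide_eq mult.commute)
  with \<open>\<alpha>max > 0\<close> show ?thesis unfolding \<kappa>_def by (simp add: field_simps)
qed

lemma h_upper: "h u \<le> h z + inner (gradh z) (u - z) + L / 2 * (norm (u - z))\<^sup>2"
  using h_deriv gradh_lipschitz by (intro lipschitz_gradient_upper_bound) auto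

lemma h_lower: "h z + inner (gradh z) (u - z) - L / 2 * (norm (u - z))\<^sup>2 \<le> h u"
  using h_deriv gradh_lipschitz by (intro lipschitz_gradient_lower_bound) auto

lemma C_mult_g: "x k \<in> \<Omega> \<Longrightarrow> C k * g (x k) = f_real (x k) + h (x k)"
  unfolding C_def using F_eq[of "x k"] g_pos_\<Omega>[of "x k"] by simp

lemma numerator_decrease:
  assumes xk: "x k \<in> \<Omega>"
  shows "f_real (x (Suc k)) + h (x (Suc k)) - C k * g (x (Suc k)) \<le> - (\<kappa> * (d k)\<^sup>2)"
proof -
  define p where "p = x (Suc k)"
  define D where "D = p - x k"
  have \<alpha>: "\<alpha> k > 0" by (rule \<alpha>_pos)
  have model: "f_real p + C k * (g (x k) - g p) - (norm D)\<^sup>2 / (2 * \<alpha> k) - inner (x k - p) (q k) \<le> f_real (x k)"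
    using prox_lower_model[of "x k" k] xk norm_minus_commute[of "x k" p] unfolding p_def D_def by simp
  have "inner (x k - p) (q k) = inner (- D) ((1 / \<alpha> k) *\<^sub>R D + gradh (x k))"
    unfolding q_def D_def p_def by simp
  also have "\<dots> = - ((norm D)\<^sup>2 / \<alpha> k) - inner D (gradh (x k))"
    by (simp add: inner_add_right power2_norm_eq_inner)
  finally have residual: "inner (x k - p) (q k) = - ((norm D)\<^sup>2 / \<alpha> k) - inner D (gradh (x k))" .
  have "h p \<le> h (x k) + inner (gradh (x k)) D + L / 2 * (norm D)\<^sup>2"
    using h_upper[of p "x k"] unfolding D_def .
  moreover have "(norm D)\<^sup>2 / (2 * \<alpha> k) = (norm D)\<^sup>2 / \<alpha> k - (norm D)\<^sup>2 / (2 * \<alpha> k)"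
    by (simp add: field_simps)
  ultimately have "f_real p + h p - C k * g p \<le> - ((1 / (2 * \<alpha> k) - L / 2) * (norm D)\<^sup>2)"
    using model residual C_mult_g[OF xk] by (simp add: algebra_simps inner_commute)
  moreover have "\<kappa> * (norm D)\<^sup>2 \<le> (1 / (2 * \<alpha> k) - L / 2) * (norm D)\<^sup>2"
    using \<alpha> \<alpha>_bounds(5)[of k] unfolding \<kappa>_def by (intro mult_right_mono) (auto simp: frac_le)
  ultimately show ?thesis unfolding p_def D_def d_def by linarith
qed

lemma C_nonneg_\<Omega>:
  assumes "x k \<in> \<Omega>"
  shows "C k \<ge> 0"
proof -
  have "C k * g (x k) \<ge> 0" using C_mult_g[OF assms] f_real_plus_h_nonneg[of "x k"] assms by simp
  with g_pos_\<Omega>[OF assms] show ?thesis by (simp add: zero_le_mult_iff)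
qed

lemma sufficient_decrease_step:
  assumes xk: "x k \<in> \<Omega>"
  shows "x (Suc k) \<in> \<Omega> \<and> C (Suc k) \<le> C k - \<kappa> * (d k)\<^sup>2 / g (x (Suc k))"
proof -
  define p where "p = x (Suc k)"
  have dec: "f_real p + h p - C k * g p \<le> - (\<kappa> * (d k)\<^sup>2)"
    using numerator_decrease[OF xk] unfolding p_def .
  have pd: "p \<in> effdom f" unfolding p_def by (rule x_Suc_in_effdom)
  have gp: "g p > 0"
  proof (rule ccontr)
    assume "\<not> g p > 0"
    hence "C k * g p \<le> 0" using C_nonneg_\<Omega>[OF xk] by (simp add: mult_nonneg_nonpos)
    hence "\<kappa> * (d k)\<^sup>2 \<le> 0" using dec f_real_plus_h_nonneg[OF pd] by linarith
    hence "p = x k" using \<kappa>_pos unfolding d_def p_def by (simp add: mult_le_0_iff)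
    thus False using \<open>\<not> g p > 0\<close> g_pos_\<Omega>[OF xk] by simp
  qed
  hence p\<Omega>: "p \<in> \<Omega>" using pd by simp
  have "C (Suc k) = (f_real p + h p) / g p" using F_eq[OF p\<Omega>] unfolding C_def p_def by simp
  also have "\<dots> \<le> (C k * g p - \<kappa> * (d k)\<^sup>2) / g p" using dec gp by (simp add: divide_right_mono)
  also have "\<dots> = C k - \<kappa> * (d k)\<^sup>2 / g p" using gp by (simp add: field_simps)
  finally show ?thesis using p\<Omega> unfolding p_def by simp
qed

lemma x_in_\<Omega>: "x k \<in> \<Omega>"
  by (induction k) (use x0 sufficient_decrease_step in auto)

lemma C_decrease: "C (Suc k) \<le> C k - \<kappa> * (d k)\<^sup>2 / g (x (Suc k))"
  using sufficient_decrease_step[OF x_in_\<Omega>] by blast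

lemma F_x: "F (x k) = ereal (C k)"
  unfolding C_def using F_eq[OF x_in_\<Omega>] by simp

lemma C_eq: "C k = (f_real (x k) + h (x k)) / g (x k)"
  unfolding C_def using F_eq[OF x_in_\<Omega>] by simp

lemma C_nonneg: "C k \<ge> 0"
  using C_nonneg_\<Omega>[OF x_in_\<Omega>] .

lemma decseq_C: "decseq C"
proof (rule decseq_SucI)
  fix k
  have "\<kappa> * (d k)\<^sup>2 / g (x (Suc k)) \<ge> 0" using \<kappa>_pos g_pos_\<Omega>[OF x_in_\<Omega>[of "Suc k"]] by simp
  thus "C (Suc k) \<le> C k" using C_decrease[of k] by linarith
qed

definition "K = {y. F y \<le> ereal (C 0)}"

lemma compact_K: "compact K"
  unfolding K_def compact_eq_bounded_closed
  using closed_sublevel_lsc_fun[OF F_lsc] F_level_bounded unfolding level_bounded_def by blast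

lemma x_in_K: "x k \<in> K"
  unfolding K_def using F_x[of k] decseqD[OF decseq_C, of 0 k] by simp

lemma K_subset_\<Omega>: "K \<subseteq> \<Omega>"
  unfolding K_def using mem_\<Omega>_if_F_finite by force

lemma isCont_g: "y \<in> \<Omega> \<Longrightarrow> isCont g y"
  using g_deriv has_derivative_continuous by blast

lemma isCont_h: "isCont h y"
  using h_deriv has_derivative_continuous by blast

lemma isCont_gradh: "isCont gradh y"
proof -
  have "L-lipschitz_on UNIV gradh"
    using gradh_lipschitz L_pos by (intro lipschitz_onI) (auto simp: dist_norm)
  hence "continuous_on UNIV gradh" by (rule lipschitz_on_continuous_on)
  thus ?thesis by (simp add: continuous_on_eq_continuous_at)
qed

lemma bounds_on_K: "\<exists>gmin gmax Gmax Hmax. gmin > 0 \<and>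
    (\<forall>y\<in>K. gmin \<le> g y \<and> g y \<le> gmax \<and> norm (gradg y) \<le> Gmax \<and> norm (gradh y) \<le> Hmax)"
proof -
  have ne: "K \<noteq> {}" using x_in_K by blast
  have "continuous_on K g" using isCont_g K_subset_\<Omega> by (meson continuous_at_imp_continuous_on subsetD)
  then obtain y1 y2 where y1: "y1 \<in> K" "\<forall>y\<in>K. g y1 \<le> g y" and y2: "\<forall>y\<in>K. g y \<le> g y2"
    using continuous_attains_inf[OF compact_K ne] continuous_attains_sup[OF compact_K ne] by metis
  have "continuous_on K (\<lambda>y. norm (gradg y))"
    using locally_lipschitz_on_imp_continuous_on[OF gradg_loc_lipschitz] K_subset_\<Omega>
    by (intro continuous_on_norm) (rule continuous_on_subset)
  then obtain y3 where y3: "\<forall>y\<in>K. norm (gradg y) \<le> norm (gradg y3)"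
    using continuous_attains_sup[OF compact_K ne] by blast
  have "continuous_on K (\<lambda>y. norm (gradh y))"
    using isCont_gradh by (intro continuous_on_norm continuous_at_imp_continuous_on) auto
  then obtain y4 where y4: "\<forall>y\<in>K. norm (gradh y) \<le> norm (gradh y4)"
    using continuous_attains_sup[OF compact_K ne] by blast
  have "g y1 > 0" using g_pos_\<Omega> y1(1) K_subset_\<Omega> by blast
  thus ?thesis using y1 y2 y3 y4 by blast
qed

lemma frechet_subgradient_at_iterate:
  "(1 / g (x (Suc k))) *\<^sub>R (gradh (x (Suc k)) - q k + (C k - C (Suc k)) *\<^sub>R gradg (x (Suc k)))
    \<in> frechet_subdiff F (x (Suc k))"
proof -
  define p where "p = x (Suc k)"
  define \<beta> where "\<beta> = C k - C (Suc k)"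
  have p\<Omega>: "p \<in> \<Omega>" unfolding p_def by (rule x_in_\<Omega>)
  show ?thesis unfolding p_def[symmetric] \<beta>_def[symmetric]
  proof (rule frechet_subdiff_quotient[where N="\<lambda>z. f_real z + h z" and G="gradg p" and \<beta>=\<beta>
        and M="1 / (2 * \<alpha>min) + L / 2"])
    show "F p = ereal (C (Suc k))" unfolding p_def by (rule F_x)
    show "g p > 0" by (rule g_pos_\<Omega>[OF p\<Omega>])
    show "(g has_derivative (\<lambda>v. inner (gradg p) v)) (at p)" using g_deriv p\<Omega> by blast
    fix z assume "F z \<noteq> \<infinity>"
    hence z\<Omega>: "z \<in> \<Omega>" by (rule mem_\<Omega>_if_F_finite)
    have "f_real p + C k * (g z - g p) - (norm (z - p))\<^sup>2 / (2 * \<alpha> k) - inner (z - p) (q k) \<le> f_real z"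
      using prox_lower_model[of z k] z\<Omega> unfolding p_def by blast
    moreover have "(norm (z - p))\<^sup>2 / (2 * \<alpha> k) \<le> (norm (z - p))\<^sup>2 / (2 * \<alpha>min)"
      using \<alpha>_pos[of k] \<alpha>_bounds(1,4) by (simp add: frac_le)
    moreover have "h p + inner (gradh p) (z - p) - L / 2 * (norm (z - p))\<^sup>2 \<le> h z" by (rule h_lower)
    moreover have "C (Suc k) * g p = f_real p + h p" using C_mult_g p\<Omega> unfolding p_def by blast
    ultimately show "F z = ereal ((f_real z + h z) / g z) \<and>
        inner (gradh p - q k + \<beta> *\<^sub>R gradg p) (z - p) + \<beta> * (g z - g p - inner (gradg p) (z - p))
          - (1 / (2 * \<alpha>min) + L / 2) * (norm (z - p))\<^sup>2 \<le> f_real z + h z - C (Suc k) * g z"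
      using F_eq[OF z\<Omega>] unfolding \<beta>_def
      by (simp add: inner_add_left inner_diff_left inner_commute algebra_simps)
  qed
qed

lemma C_Suc_le_upper_model:
  assumes xb: "xb \<in> \<Omega>" and Q: "\<And>k. norm (q k) \<le> Q"
  shows "C (Suc k) \<le> (f_real xb + C 0 * \<bar>g (x (Suc k)) - g xb\<bar> + (norm (xb - x (Suc k)))\<^sup>2 / (2 * \<alpha>min)
      + norm (xb - x (Suc k)) * Q + h (x (Suc k))) / g (x (Suc k))"
proof -
  define p where "p = x (Suc k)"
  have model: "f_real p + C k * (g xb - g p) - (norm (xb - p))\<^sup>2 / (2 * \<alpha> k) - inner (xb - p) (q k) \<le> f_real xb"
    using prox_lower_model[of xb k] xb unfolding p_def by simp
  have "C k * (g p - g xb) \<le> C k * \<bar>g p - g xb\<bar>" using C_nonneg[of k] by (simp add: mult_left_mono)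
  also have "\<dots> \<le> C 0 * \<bar>g p - g xb\<bar>" using decseqD[OF decseq_C, of 0 k] by (simp add: mult_right_mono)
  finally have "C k * (g p - g xb) \<le> C 0 * \<bar>g p - g xb\<bar>" .
  moreover have "(norm (xb - p))\<^sup>2 / (2 * \<alpha> k) \<le> (norm (xb - p))\<^sup>2 / (2 * \<alpha>min)"
    using \<alpha>_pos[of k] \<alpha>_bounds(1,4) by (simp add: frac_le)
  moreover have "inner (xb - p) (q k) \<le> norm (xb - p) * Q"
    using norm_cauchy_schwarz[of "xb - p" "q k"] Q[of k] by (meson mult_left_mono norm_ge_zero order_trans)
  ultimately have "f_real p + h p \<le> f_real xb + C 0 * \<bar>g p - g xb\<bar> + (norm (xb - p))\<^sup>2 / (2 * \<alpha>min)
      + norm (xb - p) * Q + h p"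
    using model by (simp add: algebra_simps)
  moreover have "g p > 0" using g_pos_\<Omega>[OF x_in_\<Omega>] unfolding p_def by simp
  ultimately show ?thesis using C_eq[of "Suc k"] unfolding p_def by (simp add: divide_right_mono)
qed

end

(* The bounds exist by compactness of K (bounds_on_K); fixing them as parameters makes the
  constants mu, b1 and b2 below available as definitions. *)
locale ppga_bounded = ppga +
  fixes gmin gmax Gmax Hmax :: real
  assumes gmin_pos: "gmin > 0"
    and bounds_K: "\<And>y. y \<in> K \<Longrightarrow> gmin \<le> g y \<and> g y \<le> gmax \<and> norm (gradg y) \<le> Gmax \<and> norm (gradh y) \<le> Hmax"
begin

lemma bounds_x: "gmin \<le> g (x k)" "g (x k) \<le> gmax" "norm (gradg (x k)) \<le> Gmax" "norm (gradh (x k)) \<le> Hmax"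
  using bounds_K[OF x_in_K[of k]] by auto

definition "\<mu> = \<kappa> / gmax"

lemma \<mu>_pos: "\<mu> > 0"
  unfolding \<mu>_def using \<kappa>_pos gmin_pos bounds_x(1,2)[of 0] by simp

lemma C_decrease_sq: "\<mu> * (d k)\<^sup>2 \<le> C k - C (Suc k)"
proof -
  have "\<kappa> * (d k)\<^sup>2 / gmax \<le> \<kappa> * (d k)\<^sup>2 / g (x (Suc k))"
    using \<kappa>_pos gmin_pos bounds_x(1,2)[of "Suc k"] by (intro frac_le) auto
  thus ?thesis using C_decrease[of k] unfolding \<mu>_def by simp
qed

definition "C_inf = lim C"

lemma C_tendsto: "C \<longlonglongrightarrow> C_inf"
proof -
  obtain l where "C \<longlonglongrightarrow> l" using decseq_convergent[OF decseq_C, of 0] C_nonneg by blast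
  thus ?thesis unfolding C_inf_def by (simp add: limI)
qed

lemma C_inf_le: "C_inf \<le> C k"
  using decseq_ge[OF decseq_C C_tendsto] .

lemma d_nonneg: "d k \<ge> 0"
  unfolding d_def by simp

lemma d_tendsto_0: "d \<longlonglongrightarrow> 0"
proof (rule tendsto_sandwich[where f="\<lambda>_. 0"])
  have "(\<lambda>k. (C k - C (Suc k)) / \<mu>) \<longlonglongrightarrow> (C_inf - C_inf) / \<mu>"
    using \<mu>_pos by (intro tendsto_intros C_tendsto LIMSEQ_Suc[OF C_tendsto]) auto
  thus "(\<lambda>k. sqrt ((C k - C (Suc k)) / \<mu>)) \<longlonglongrightarrow> 0"
    using tendsto_real_sqrt by fastforce
  show "\<forall>\<^sub>F k in sequentially. d k \<le> sqrt ((C k - C (Suc k)) / \<mu>)"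
    using C_decrease_sq d_nonneg \<mu>_pos
    by (intro always_eventually allI real_le_rsqrt) (simp add: le_divide_eq mult.commute)
qed (auto simp: d_nonneg)

definition "b1 = (L + 1 / \<alpha>min) / gmin"
definition "b2 = Gmax / gmin"

lemma relative_error:
  "\<exists>v \<in> frechet_subdiff F (x (Suc k)). norm v \<le> b1 * d k + b2 * (C k - C (Suc k))"
proof -
  define p where "p = x (Suc k)"
  define \<beta> where "\<beta> = C k - C (Suc k)"
  have \<beta>: "\<beta> \<ge> 0" unfolding \<beta>_def using decseqD[OF decseq_C, of k "Suc k"] by simp
  have "gradh p - q k = (gradh p - gradh (x k)) - (1 / \<alpha> k) *\<^sub>R (x (Suc k) - x k)"
    unfolding q_def by (simp add: algebra_simps)
  hence "norm (gradh p - q k) \<le> norm (gradh p - gradh (x k)) + norm ((1 / \<alpha> k) *\<^sub>R (x (Suc k) - x k))"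
    by (metis norm_triangle_ineq4)
  also have "\<dots> \<le> L * d k + d k / \<alpha>min"
    using gradh_lipschitz \<alpha>_pos[of k] \<alpha>_bounds(1) \<alpha>_bounds(4)[of k] d_nonneg[of k]
    by (intro add_mono) (auto simp: p_def d_def frac_le)
  finally have "norm (gradh p - q k + \<beta> *\<^sub>R gradg p) \<le> (L + 1 / \<alpha>min) * d k + \<beta> * Gmax"
    using norm_triangle_ineq[of "gradh p - q k" "\<beta> *\<^sub>R gradg p"] \<beta> bounds_x(3)[of "Suc k"]
      mult_left_mono[of "norm (gradg p)" Gmax \<beta>]
    by (simp add: p_def algebra_simps)
  moreover have "gmin \<le> g p" using bounds_x(1)[of "Suc k"] unfolding p_def .
  ultimately have "norm (gradh p - q k + \<beta> *\<^sub>R gradg p) / g p \<le> ((L + 1 / \<alpha>min) * d k + \<beta> * Gmax) / gmin"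
    using gmin_pos by (meson frac_le norm_ge_zero order_trans)
  moreover have "norm ((1 / g p) *\<^sub>R (gradh p - q k + \<beta> *\<^sub>R gradg p)) = norm (gradh p - q k + \<beta> *\<^sub>R gradg p) / g p"
    using gmin_pos \<open>gmin \<le> g p\<close> by simp
  moreover have "((L + 1 / \<alpha>min) * d k + \<beta> * Gmax) / gmin = b1 * d k + b2 * \<beta>"
    unfolding b1_def b2_def by (simp add: add_divide_distrib field_simps)
  ultimately have "norm ((1 / g p) *\<^sub>R (gradh p - q k + \<beta> *\<^sub>R gradg p)) \<le> b1 * d k + b2 * \<beta>"
    by linarith
  thus ?thesis using frechet_subgradient_at_iterate[of k] unfolding p_def \<beta>_def by blast
qed

lemma q_bounded: "\<exists>Q. \<forall>k. norm (q k) \<le> Q"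
proof -
  obtain D where D: "\<And>k. norm (d k) \<le> D"
    using BseqE[OF convergent_imp_Bseq[OF convergentI[OF d_tendsto_0]]] by metis
  have "norm (q k) \<le> D / \<alpha>min + Hmax" for k
  proof -
    have "norm (q k) \<le> norm ((1 / \<alpha> k) *\<^sub>R (x (Suc k) - x k)) + norm (gradh (x k))"
      unfolding q_def by (rule norm_triangle_ineq)
    also have "norm ((1 / \<alpha> k) *\<^sub>R (x (Suc k) - x k)) = d k / \<alpha> k"
      using \<alpha>_pos[of k] unfolding d_def by simp
    also have "d k / \<alpha> k \<le> D / \<alpha>min"
      using D[of k] d_nonneg[of k] \<alpha>_pos[of k] \<alpha>_bounds(1) \<alpha>_bounds(4)[of k] by (simp add: frac_le)
    finally show ?thesis using bounds_x(4)[of k] by linarith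
  qed
  thus ?thesis by blast
qed

lemma x_Suc_subseq_tendsto:
  assumes "strict_mono \<sigma>" "(x \<circ> \<sigma>) \<longlonglongrightarrow> xb"
  shows "(\<lambda>j. x (Suc (\<sigma> j))) \<longlonglongrightarrow> xb"
proof -
  have "(\<lambda>j. d (\<sigma> j)) \<longlonglongrightarrow> 0" using LIMSEQ_subseq_LIMSEQ[OF d_tendsto_0 assms(1)] by (simp add: o_def)
  hence "(\<lambda>j. x (Suc (\<sigma> j)) - x (\<sigma> j)) \<longlonglongrightarrow> 0" unfolding d_def by (rule tendsto_norm_zero_cancel)
  hence "(\<lambda>j. x (\<sigma> j) + (x (Suc (\<sigma> j)) - x (\<sigma> j))) \<longlonglongrightarrow> xb + 0"
    using assms(2) by (intro tendsto_add) (auto simp: o_def)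
  thus ?thesis by simp
qed

lemma F_cluster_point:
  assumes xb: "xb \<in> K" and \<sigma>: "strict_mono \<sigma>" "(x \<circ> \<sigma>) \<longlonglongrightarrow> xb"
  shows "F xb = ereal C_inf"
proof -
  have xb\<Omega>: "xb \<in> \<Omega>" using xb K_subset_\<Omega> by blast
  have "F xb \<le> ereal C_inf"
    using lsc_fun_limit_le[OF F_lsc \<sigma>(2), of "C \<circ> \<sigma>" C_inf] F_x LIMSEQ_subseq_LIMSEQ[OF C_tendsto \<sigma>(1)]
    by simp
  moreover have "C_inf \<le> (f_real xb + h xb) / g xb"
  proof -
    obtain Q where Q: "\<And>k. norm (q k) \<le> Q" using q_bounded by blast
    define p where "p j = x (Suc (\<sigma> j))" for j
    have p: "p \<longlonglongrightarrow> xb" unfolding p_def by (rule x_Suc_subseq_tendsto[OF \<sigma>])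
    have "(\<lambda>j. (f_real xb + C 0 * \<bar>g (p j) - g xb\<bar> + (norm (xb - p j))\<^sup>2 / (2 * \<alpha>min)
        + norm (xb - p j) * Q + h (p j)) / g (p j)) \<longlonglongrightarrow>
      (f_real xb + C 0 * \<bar>g xb - g xb\<bar> + (norm (xb - xb))\<^sup>2 / (2 * \<alpha>min) + norm (xb - xb) * Q + h xb) / g xb"
      using g_pos_\<Omega>[OF xb\<Omega>] \<alpha>_bounds(1)
      by (intro tendsto_intros isCont_tendsto_compose[OF isCont_g[OF xb\<Omega>] p]
          isCont_tendsto_compose[OF isCont_h p] p) auto
    moreover have "(\<lambda>j. C (Suc (\<sigma> j))) \<longlonglongrightarrow> C_inf"
      using LIMSEQ_subseq_LIMSEQ[OF LIMSEQ_Suc[OF C_tendsto] \<sigma>(1)] by (simp add: o_def)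
    ultimately show ?thesis
      using C_Suc_le_upper_model[OF xb\<Omega> Q] unfolding p_def by (simp add: LIMSEQ_le)
  qed
  ultimately show ?thesis using F_eq[OF xb\<Omega>] by simp
qed

definition "r k = C k - C_inf"

lemma r_nonneg: "r k \<ge> 0"
  unfolding r_def using C_inf_le by simp

lemma r_Suc_le: "r (Suc k) \<le> r k"
  unfolding r_def using decseqD[OF decseq_C, of k "Suc k"] by simp

lemma b1_pos: "b1 > 0"
  unfolding b1_def using L_pos \<alpha>_bounds(1) gmin_pos by (simp add: add_pos_pos)

lemma b2_nonneg: "b2 \<ge> 0"
  unfolding b2_def using gmin_pos order_trans[OF norm_ge_zero bounds_x(3)[of 0]] by simp

lemma KL_subgradient_bound:
  assumes Fxb: "F xb = ereal C_inf"
    and kl: "\<forall>y\<in>U. F xb < F y \<and> F y < F xb + \<eta> \<longrightarrow>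
      ereal (\<psi>' (real_of_ereal (F y - F xb))) * dist_set 0 (limiting_subdiff F y) \<ge> 1"
    and \<psi>': "\<psi>' (r (Suc k)) > 0" and "x (Suc k) \<in> U" and r: "0 < r (Suc k)" "ereal (r (Suc k)) < \<eta>"
  shows "1 \<le> \<psi>' (r (Suc k)) * (b1 * d k + b2 * (C k - C (Suc k)))"
proof -
  have "F (x (Suc k)) < F xb + \<eta>"
    using Fxb F_x[of "Suc k"] r(2) unfolding r_def by (cases \<eta>) auto
  moreover have "F xb < F (x (Suc k))" using Fxb F_x[of "Suc k"] r(1) unfolding r_def by simp
  moreover have "real_of_ereal (F (x (Suc k)) - F xb) = r (Suc k)"
    using Fxb F_x[of "Suc k"] unfolding r_def by simp
  ultimately have KL: "1 \<le> ereal (\<psi>' (r (Suc k))) * dist_set 0 (limiting_subdiff F (x (Suc k)))"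
    using kl \<open>x (Suc k) \<in> U\<close> by force
  obtain v where v: "v \<in> frechet_subdiff F (x (Suc k))" "norm v \<le> b1 * d k + b2 * (C k - C (Suc k))"
    using relative_error[of k] by blast
  have "dist_set 0 (limiting_subdiff F (x (Suc k))) \<le> ereal (b1 * d k + b2 * (C k - C (Suc k)))"
    using dist_set_limiting_subdiff_le[OF v(1)] v(2) by (meson ereal_less_eq(3) order_trans)
  hence "ereal (\<psi>' (r (Suc k))) * dist_set 0 (limiting_subdiff F (x (Suc k)))
      \<le> ereal (\<psi>' (r (Suc k))) * ereal (b1 * d k + b2 * (C k - C (Suc k)))"
    using \<psi>' by (intro ereal_mult_left_mono) auto
  with KL show ?thesis by (metis order_trans times_ereal.simps(1) ereal_less_eq(3) one_ereal_def)
qed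

lemma KL_step_sq_bound:
  assumes Fxb: "F xb = ereal C_inf"
    and concave: "concave_on {t. 0 \<le> t \<and> ereal t < \<eta>} \<psi>"
    and deriv: "\<forall>t. 0 < t \<and> ereal t < \<eta> \<longrightarrow> (\<psi> has_real_derivative \<psi>' t) (at t) \<and> \<psi>' t > 0"
    and kl: "\<forall>y\<in>U. F xb < F y \<and> F y < F xb + \<eta> \<longrightarrow>
      ereal (\<psi>' (real_of_ereal (F y - F xb))) * dist_set 0 (limiting_subdiff F y) \<ge> 1"
    and xU: "x (Suc k) \<in> U" and r: "0 < r (Suc k)" "ereal (r (Suc k)) < \<eta>"
  shows "0 \<le> \<psi> (r (Suc k)) - \<psi> (r (Suc (Suc k)))"
    and "\<mu> * (d (Suc k))\<^sup>2 \<le> (b1 * d k + b2 * (C k - C (Suc k))) * (\<psi> (r (Suc k)) - \<psi> (r (Suc (Suc k))))"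
proof -
  define s where "s = Suc k"
  define Q where "Q = b1 * d k + b2 * (C k - C s)"
  define D where "D = \<psi> (r s) - \<psi> (r (Suc s))"
  have \<psi>': "\<psi>' (r s) > 0" "(\<psi> has_real_derivative \<psi>' (r s)) (at (r s))"
    using deriv r unfolding s_def by auto
  have Q: "Q \<ge> 0"
    unfolding Q_def using b1_pos b2_nonneg d_nonneg[of k] decseqD[OF decseq_C, of k s]
    by (simp add: s_def)
  have "\<psi>' (r s) * (\<mu> * (d s)\<^sup>2) \<le> \<psi>' (r s) * (r s - r (Suc s))"
    using C_decrease_sq[of s] \<psi>'(1) unfolding r_def by simp
  also have "\<dots> \<le> D"
    unfolding D_def using concave_on_deriv_le_diff[OF concave r[folded s_def] \<psi>'(2)] r_nonneg r_Suc_le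
    by simp
  finally have tangent: "\<psi>' (r s) * (\<mu> * (d s)\<^sup>2) \<le> D" .
  thus "0 \<le> \<psi> (r (Suc k)) - \<psi> (r (Suc (Suc k)))"
    using \<psi>'(1) \<mu>_pos unfolding D_def s_def by (smt (verit) mult_nonneg_nonneg zero_le_power2)
  have "\<mu> * (d s)\<^sup>2 \<le> (\<psi>' (r s) * Q) * (\<mu> * (d s)\<^sup>2)"
    using KL_subgradient_bound[OF Fxb kl _ xU] \<psi>'(1) r \<mu>_pos
      mult_right_mono[of 1 "\<psi>' (r s) * Q" "\<mu> * (d s)\<^sup>2"]
    unfolding Q_def s_def by simp
  also have "\<dots> = Q * (\<psi>' (r s) * (\<mu> * (d s)\<^sup>2))" by (simp add: ac_simps)
  also have "\<dots> \<le> Q * D" using mult_left_mono[OF tangent Q] .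
  finally show "\<mu> * (d (Suc k))\<^sup>2 \<le> (b1 * d k + b2 * (C k - C (Suc k))) * (\<psi> (r (Suc k)) - \<psi> (r (Suc (Suc k))))"
    unfolding Q_def D_def s_def .
qed

lemma KL_descent_step:
  assumes Fxb: "F xb = ereal C_inf"
    and concave: "concave_on {t. 0 \<le> t \<and> ereal t < \<eta>} \<psi>"
    and deriv: "\<forall>t. 0 < t \<and> ereal t < \<eta> \<longrightarrow> (\<psi> has_real_derivative \<psi>' t) (at t) \<and> \<psi>' t > 0"
    and kl: "\<forall>y\<in>U. F xb < F y \<and> F y < F xb + \<eta> \<longrightarrow>
      ereal (\<psi>' (real_of_ereal (F y - F xb))) * dist_set 0 (limiting_subdiff F y) \<ge> 1"
    and xU: "x (Suc k) \<in> U" and r\<eta>: "ereal (r (Suc k)) < \<eta>"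
  shows "2 * d (Suc k) \<le> 2 * b1 / \<mu> * (\<psi> (r (Suc k)) - \<psi> (r (Suc (Suc k)))) + d k / 2
    + b2 / (2 * b1) * (r k - r (Suc k))"
proof (cases "r (Suc k) = 0")
  case True
  hence "r (Suc (Suc k)) = 0" using r_Suc_le[of "Suc k"] r_nonneg[of "Suc (Suc k)"] by simp
  hence "\<mu> * (d (Suc k))\<^sup>2 \<le> 0" using C_decrease_sq[of "Suc k"] True unfolding r_def by simp
  hence "d (Suc k) = 0" using \<mu>_pos by (simp add: mult_le_0_iff)
  moreover have "b2 / (2 * b1) * (r k - r (Suc k)) \<ge> 0" using b1_pos b2_nonneg r_Suc_le[of k] by simp
  ultimately show ?thesis using True \<open>r (Suc (Suc k)) = 0\<close> d_nonneg[of k] by simp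
next
  case False
  hence r: "0 < r (Suc k)" using r_nonneg[of "Suc k"] by simp
  define A where "A = 2 * b1 / \<mu> * (\<psi> (r (Suc k)) - \<psi> (r (Suc (Suc k))))"
  define B where "B = (b1 * d k + b2 * (C k - C (Suc k))) / (2 * b1)"
  have "(d (Suc k))\<^sup>2 \<le> (b1 * d k + b2 * (C k - C (Suc k))) * (\<psi> (r (Suc k)) - \<psi> (r (Suc (Suc k)))) / \<mu>"
    using KL_step_sq_bound(2)[OF Fxb concave deriv kl xU r r\<eta>] \<mu>_pos
    by (simp add: pos_le_divide_eq mult.commute)
  also have "\<dots> = A * B" unfolding A_def B_def using b1_pos \<mu>_pos by (simp add: field_simps)
  finally have "d (Suc k) \<le> sqrt (A * B)" by (rule real_le_rsqrt)
  also have "\<dots> \<le> (A + B) / 2"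
  proof (rule arith_geo_mean_sqrt)
    show "0 \<le> A" unfolding A_def
      using KL_step_sq_bound(1)[OF Fxb concave deriv kl xU r r\<eta>] \<mu>_pos b1_pos by simp
    show "0 \<le> B" unfolding B_def
      using b1_pos b2_nonneg d_nonneg[of k] decseqD[OF decseq_C, of k "Suc k"] by simp
  qed
  moreover have "B = d k / 2 + b2 / (2 * b1) * (r k - r (Suc k))"
    unfolding B_def r_def using b1_pos by (simp add: field_simps)
  ultimately show ?thesis unfolding A_def by simp
qed

lemma q_tendsto:
  assumes "x \<longlonglongrightarrow> xb"
  shows "q \<longlonglongrightarrow> gradh xb"
proof -
  have "(\<lambda>k. norm ((1 / \<alpha> k) *\<^sub>R (x (Suc k) - x k))) \<longlonglongrightarrow> 0"
  proof (rule tendsto_sandwich[where f="\<lambda>_. 0" and h="\<lambda>k. d k / \<alpha>min"])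
    show "\<forall>\<^sub>F k in sequentially. norm ((1 / \<alpha> k) *\<^sub>R (x (Suc k) - x k)) \<le> d k / \<alpha>min"
    proof (intro always_eventually allI)
      fix k
      have "norm ((1 / \<alpha> k) *\<^sub>R (x (Suc k) - x k)) = d k / \<alpha> k"
        using \<alpha>_pos[of k] unfolding d_def by simp
      also have "\<dots> \<le> d k / \<alpha>min"
        using \<alpha>_pos[of k] \<alpha>_bounds(1) \<alpha>_bounds(4)[of k] d_nonneg[of k] by (simp add: frac_le)
      finally show "norm ((1 / \<alpha> k) *\<^sub>R (x (Suc k) - x k)) \<le> d k / \<alpha>min" .
    qed
    show "(\<lambda>k. d k / \<alpha>min) \<longlonglongrightarrow> 0"
      using tendsto_divide[OF d_tendsto_0 tendsto_const, of \<alpha>min] \<alpha>_bounds(1) by simp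
  qed auto
  hence "(\<lambda>k. (1 / \<alpha> k) *\<^sub>R (x (Suc k) - x k) + gradh (x k)) \<longlonglongrightarrow> 0 + gradh xb"
    by (intro tendsto_add isCont_tendsto_compose[OF isCont_gradh assms]) (rule tendsto_norm_zero_cancel)
  thus ?thesis unfolding q_def[abs_def] by simp
qed

lemma prox_lower_model_limit:
  assumes x: "x \<longlonglongrightarrow> xb" and Fxb: "F xb = ereal C_inf" and z: "z \<in> effdom f"
  shows "f_real xb + C_inf * (g z - g xb) - (norm (z - xb))\<^sup>2 / (2 * \<alpha>min) - inner (z - xb) (gradh xb)
    \<le> f_real z"
proof -
  have xb\<Omega>: "xb \<in> \<Omega>" using Fxb mem_\<Omega>_if_F_finite by simp
  define p where "p k = x (Suc k)" for k
  have p: "p \<longlonglongrightarrow> xb" unfolding p_def by (rule LIMSEQ_Suc[OF x])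
  have g_p: "(\<lambda>k. g (p k)) \<longlonglongrightarrow> g xb" by (rule isCont_tendsto_compose[OF isCont_g[OF xb\<Omega>] p])
  have "(\<lambda>k. C (Suc k) * g (p k) - h (p k)) \<longlonglongrightarrow> C_inf * g xb - h xb"
    by (intro tendsto_intros LIMSEQ_Suc[OF C_tendsto] g_p isCont_tendsto_compose[OF isCont_h p])
  moreover have "f_real (p k) = C (Suc k) * g (p k) - h (p k)" for k
    using C_mult_g[OF x_in_\<Omega>, of "Suc k"] unfolding p_def by simp
  moreover have "C_inf * g xb = f_real xb + h xb"
    using Fxb F_eq[OF xb\<Omega>] g_pos_\<Omega>[OF xb\<Omega>] by (simp add: field_simps)
  ultimately have f_p: "(\<lambda>k. f_real (p k)) \<longlonglongrightarrow> f_real xb" by simp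
  have "f_real (p k) + C k * (g z - g (p k)) - (norm (z - p k))\<^sup>2 / (2 * \<alpha>min) - inner (z - p k) (q k)
      \<le> f_real z" for k
  proof -
    have "(norm (z - p k))\<^sup>2 / (2 * \<alpha> k) \<le> (norm (z - p k))\<^sup>2 / (2 * \<alpha>min)"
      using \<alpha>_pos[of k] \<alpha>_bounds(1) \<alpha>_bounds(4)[of k] by (simp add: frac_le)
    thus ?thesis using prox_lower_model[OF z, of k] unfolding p_def by simp
  qed
  moreover have "(\<lambda>k. f_real (p k) + C k * (g z - g (p k)) - (norm (z - p k))\<^sup>2 / (2 * \<alpha>min)
      - inner (z - p k) (q k)) \<longlonglongrightarrow>
    f_real xb + C_inf * (g z - g xb) - (norm (z - xb))\<^sup>2 / (2 * \<alpha>min) - inner (z - xb) (gradh xb)"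
    using \<alpha>_bounds(1) by (intro tendsto_intros f_p C_tendsto g_p p q_tendsto[OF x]) auto
  ultimately show ?thesis by (intro LIMSEQ_le_const2) auto
qed

lemma stationary_limit:
  assumes x: "x \<longlonglongrightarrow> xb" and Fxb: "F xb = ereal C_inf"
  shows "0 \<in> frechet_subdiff F xb"
proof -
  have xb\<Omega>: "xb \<in> \<Omega>" using Fxb mem_\<Omega>_if_F_finite by simp
  have C_inf_g: "C_inf * g xb = f_real xb + h xb"
    using Fxb F_eq[OF xb\<Omega>] g_pos_\<Omega>[OF xb\<Omega>] by (simp add: field_simps)
  have "(1 / g xb) *\<^sub>R 0 \<in> frechet_subdiff F xb"
  proof (rule frechet_subdiff_quotient[where N="\<lambda>z. f_real z + h z" and \<beta>=0
        and M="1 / (2 * \<alpha>min) + L / 2"])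
    show "F xb = ereal C_inf" by (rule Fxb)
    show "g xb > 0" by (rule g_pos_\<Omega>[OF xb\<Omega>])
    show "(g has_derivative (\<lambda>v. inner (gradg xb) v)) (at xb)" using g_deriv xb\<Omega> by blast
    fix z assume "F z \<noteq> \<infinity>"
    hence z\<Omega>: "z \<in> \<Omega>" by (rule mem_\<Omega>_if_F_finite)
    have "f_real xb + C_inf * (g z - g xb) - (norm (z - xb))\<^sup>2 / (2 * \<alpha>min)
        - inner (z - xb) (gradh xb) \<le> f_real z"
      using z\<Omega> by (intro prox_lower_model_limit[OF x Fxb]) simp
    moreover have "h xb + inner (gradh xb) (z - xb) - L / 2 * (norm (z - xb))\<^sup>2 \<le> h z" by (rule h_lower)
    moreover have "inner (z - xb) (gradh xb) = inner (gradh xb) (z - xb)" by (rule inner_commute)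
    moreover have "(1 / (2 * \<alpha>min) + L / 2) * (norm (z - xb))\<^sup>2
        = (norm (z - xb))\<^sup>2 / (2 * \<alpha>min) + L / 2 * (norm (z - xb))\<^sup>2"
      by (simp add: algebra_simps)
    moreover have "C_inf * (g z - g xb) = C_inf * g z - C_inf * g xb" by (simp add: algebra_simps)
    ultimately show "F z = ereal ((f_real z + h z) / g z) \<and>
        inner 0 (z - xb) + 0 * (g z - g xb - inner (gradg xb) (z - xb))
          - (1 / (2 * \<alpha>min) + L / 2) * (norm (z - xb))\<^sup>2 \<le> f_real z + h z - C_inf * g z"
      using F_eq[OF z\<Omega>] C_inf_g by simp
  qed
  thus ?thesis by simp
qed

lemma summable_step_lengths:
  assumes \<sigma>: "strict_mono \<sigma>" "(x \<circ> \<sigma>) \<longlonglongrightarrow> xb" and Fxb: "F xb = ereal C_inf"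
    and KL: "KL_property F xb"
  shows "summable (\<lambda>k. norm (x (Suc k) - x k))"
proof -
  obtain \<eta> U \<psi> \<psi>' where \<eta>: "\<eta> > 0" and U: "open U" "xb \<in> U"
    and \<psi>_cont: "continuous_on {t. 0 \<le> t \<and> ereal t < \<eta>} \<psi>"
    and concave: "concave_on {t. 0 \<le> t \<and> ereal t < \<eta>} \<psi>"
    and \<psi>_nonneg: "\<forall>t. 0 \<le> t \<and> ereal t < \<eta> \<longrightarrow> \<psi> t \<ge> 0" and \<psi>0: "\<psi> 0 = 0"
    and deriv: "\<forall>t. 0 < t \<and> ereal t < \<eta> \<longrightarrow> (\<psi> has_real_derivative \<psi>' t) (at t) \<and> \<psi>' t > 0"
    and kl: "\<forall>y\<in>U. F xb < F y \<and> F y < F xb + \<eta> \<longrightarrow>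
      ereal (\<psi>' (real_of_ereal (F y - F xb))) * dist_set 0 (limiting_subdiff F y) \<ge> 1"
    using KL unfolding KL_property_def by blast
  obtain \<rho> where \<rho>: "\<rho> > 0" "ball xb \<rho> \<subseteq> U" using U open_contains_ball by blast
  define P where "P k = 2 * b1 / \<mu> * \<psi> (r (Suc k)) + b2 / (2 * b1) * r k" for k
  have r: "r \<longlonglongrightarrow> 0"
    using tendsto_diff[OF C_tendsto tendsto_const, of C_inf] unfolding r_def[abs_def] by simp
  have "(\<lambda>k. ereal (r k)) \<longlonglongrightarrow> 0" using r by (simp add: zero_ereal_def)
  hence "\<forall>\<^sub>F k in sequentially. ereal (r k) < \<eta>" using \<eta> by (rule order_tendstoD(2))
  hence r\<eta>: "\<forall>\<^sub>F k in sequentially. ereal (r (Suc k)) < \<eta>" by (rule eventually_sequentially_Suc[THEN iffD2])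
  have "(\<lambda>k. \<psi> (r (Suc k))) \<longlonglongrightarrow> \<psi> 0"
  proof (rule continuous_on_tendsto_compose[OF \<psi>_cont LIMSEQ_Suc[OF r]])
    show "0 \<in> {t. 0 \<le> t \<and> ereal t < \<eta>}" using \<eta> by (simp add: zero_ereal_def[symmetric])
    show "\<forall>\<^sub>F k in sequentially. r (Suc k) \<in> {t. 0 \<le> t \<and> ereal t < \<eta>}"
      using r\<eta> r_nonneg by (auto elim: eventually_mono)
  qed
  hence "P \<longlonglongrightarrow> 2 * b1 / \<mu> * \<psi> 0 + b2 / (2 * b1) * 0"
    unfolding P_def[abs_def] by (intro tendsto_intros r)
  hence P: "P \<longlonglongrightarrow> 0" using \<psi>0 by simp
  show ?thesis
  proof (rule summable_of_eventual_descent[OF \<sigma> \<rho>(1) d_tendsto_0[unfolded d_def[abs_def]] P])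
    show "\<forall>\<^sub>F k in sequentially. 0 \<le> P k \<and> (x (Suc k) \<in> ball xb \<rho> \<longrightarrow>
        2 * norm (x (Suc (Suc k)) - x (Suc k)) \<le> P k - P (Suc k) + norm (x (Suc k) - x k) / 2)"
      using r\<eta>
    proof eventually_elim
      case (elim k)
      have "0 \<le> P k"
        unfolding P_def using \<psi>_nonneg r_nonneg elim \<mu>_pos b1_pos b2_nonneg by simp
      moreover have "2 * d (Suc k) \<le> P k - P (Suc k) + d k / 2" if "x (Suc k) \<in> U"
        using KL_descent_step[OF Fxb concave deriv kl that elim] unfolding P_def by (simp add: algebra_simps)
      ultimately show ?case using \<rho>(2) unfolding d_def by blast
    qed
  qed
qed

theorem finite_length_and_stationary_limit:
  assumes KL: "\<forall>y \<in> effdom F. KL_property F y"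
  shows "summable (\<lambda>k. norm (x (Suc k) - x k)) \<and> (\<exists>xs. x \<longlonglongrightarrow> xs \<and> 0 \<in> frechet_subdiff F xs)"
proof -
  obtain xb \<sigma> where xb: "xb \<in> K" and \<sigma>: "strict_mono \<sigma>" "(x \<circ> \<sigma>) \<longlonglongrightarrow> xb"
    using seq_compactE[OF compact_imp_seq_compact[OF compact_K], of x] x_in_K by (metis comp_def)
  have Fxb: "F xb = ereal C_inf" by (rule F_cluster_point[OF xb \<sigma>])
  hence "KL_property F xb" using KL unfolding effdom_def by simp
  hence summable: "summable (\<lambda>k. norm (x (Suc k) - x k))" by (rule summable_step_lengths[OF \<sigma> Fxb])
  hence "x \<longlonglongrightarrow> xb" by (rule LIMSEQ_of_summable_norm_diff[OF _ \<sigma>])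
  with summable stationary_limit[OF _ Fxb] show ?thesis by blast
qed

end

theorem mainTheorem12:
  fixes f :: "'a::euclidean_space \<Rightarrow> ereal"
    and g h :: "'a \<Rightarrow> real"
    and gradg gradh :: "'a \<Rightarrow> 'a"
    and L :: real
    and \<alpha> :: "nat \<Rightarrow> real"
    and x :: "nat \<Rightarrow> 'a"
  assumes f_proper: "proper_fun f"
    and f_lsc: "lsc_fun f"
    and A1_i: "locally_lipschitz_on (effdom f \<inter> {y. g y \<noteq> 0}) (\<lambda>y. real_of_ereal (f y))"
    and A1_ii_diff: "\<forall>y \<in> {y. g y \<noteq> 0} \<inter> effdom f. (g has_derivative (\<lambda>v. inner (gradg y) v)) (at y)"
    and A1_ii_lip: "locally_lipschitz_on ({y. g y \<noteq> 0} \<inter> effdom f) gradg"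
    and A1_ii_pos: "\<forall>y \<in> {y. g y \<noteq> 0} \<inter> effdom f. g y > 0"
    and A1_iii_diff: "\<forall>y. (h has_derivative (\<lambda>v. inner (gradh y) v)) (at y)"
    and A1_iii_lip: "\<forall>y z. norm (gradh y - gradh z) \<le> L * norm (y - z)"
    and A1_iii_L: "L > 0"
    and A1_iv_nonneg: "\<forall>y \<in> effdom f. f y + ereal (h y) \<ge> 0"
    and A1_iv_ne: "{y. g y \<noteq> 0} \<inter> effdom f \<noteq> {}"
    and A1_v: "\<forall>z (\<gamma>::real). \<gamma> \<ge> 0 \<longrightarrow> prox (\<lambda>u. f u - ereal (\<gamma> * g u)) z \<noteq> {}"
    and A1_vi_lsc: "lsc_fun (frac_obj f g h)"
    and A1_vi_lb: "level_bounded (frac_obj f g h)"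
    and ppga: "PPGA_seq f g h gradh L \<alpha> x"
    and KL: "\<forall>y \<in> effdom (frac_obj f g h). KL_property (frac_obj f g h) y"
  shows "summable (\<lambda>k. norm (x (Suc k) - x k)) \<and>
         (\<exists>xs. x \<longlonglongrightarrow> xs \<and> 0 \<in> frechet_subdiff (frac_obj f g h) xs)"
proof -
  (* f_lsc, A1_iv_ne and A1_v only guarantee that the iterates exist, which ppga presupposes. *)
  obtain \<alpha>min \<alpha>max where \<alpha>: "0 < \<alpha>min" "\<alpha>min \<le> \<alpha>max" "\<alpha>max < 1 / L"
      "\<forall>k. \<alpha>min \<le> \<alpha> k \<and> \<alpha> k \<le> \<alpha>max"
    using ppga unfolding PPGA_seq_def by blast
  interpret ppga f g h gradg gradh L \<alpha> x \<alpha>min \<alpha>max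
    using assms \<alpha> unfolding PPGA_seq_def by unfold_locales blast+
  obtain gmin gmax Gmax Hmax where "gmin > 0"
      "\<forall>y\<in>K. gmin \<le> g y \<and> g y \<le> gmax \<and> norm (gradg y) \<le> Gmax \<and> norm (gradh y) \<le> Hmax"
    using bounds_on_K by blast
  then interpret ppga_bounded f g h gradg gradh L \<alpha> x \<alpha>min \<alpha>max gmin gmax Gmax Hmax
    by unfold_locales auto
  show ?thesis using finite_length_and_stationary_limit KL by blast
qed

end
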